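(* Let $N,M\ge1$, $\mathcal H_+=\mathbb C^N$, $\mathcal H_-=\mathbb C^M$, $\mathcal H=\mathcal H_+\oplus\mathcal H_-$. Fix $b>0$ and $d_1,\dots,d_M\in i\mathbb R$, and put $B=\mathrm{diag}(b,0,\dots,0)$ ($N\times N$) and $D=\mathrm{diag}(d_1,\dots,d_M)$. Consider rank one partial isometries $u:\mathcal H_+\to\mathcal H_-$ of the form: first column $(\alpha_1,\dots,\alpha_M)^T$ with $\sum_j|\alpha_j|^2=1$, all other columns zero, and set $\mu=\begin{pmatrix}0&-Bu^*\\ uB&D\end{pmatrix}$. Consider the system of equations $$\frac{\partial}{\partial t^n_k}u=i^{n+1}\big(\mu H^{n-1}_{k-1}(\mu)\big)_{--}\,u,\qquad n\ge1,\ 1\le k\le n/2+1 .$$ Let $p^n_{j,k}$ be the real-coefficient polynomials such that, for every such $u$, the $j$-th entry of the first column of the right-hand side equals $i\,p^n_{j,k}(|\alpha_1|^2,\dots,|\alpha_M|^2)\alpha_j$ (all other columns of the right-hand side being zero). Then for any initial values $\alpha^0_1,\dots,\alpha^0_M\in\mathbb C$ with $\sum_j|\alpha^0_j|^2=1$, the solution of this system with $\alpha_j=\alpha_j^0$ at all times zero is $$\alpha_j(t^1_1,t^2_1,t^2_2,\dots)=\alpha_j^0\exp\Big(i\sum_{n,\ k\le n/2+1}p^n_{j,k}\big(|\alpha^0_1|^2,\dots,|\alpha^0_M|^2\big)\,t^n_k\Big),\qquad j=1,\dots,M.$$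
   Context: $P_+$ and $P_-$ denote the orthogonal projectors of $\mathcal H$ onto $\mathcal H_+$ and $\mathcal H_-$; for an operator $X$ on $\mathcal H$, $X_{--}$ denotes the block $P_-XP_-$ regarded as an operator on $\mathcal H_-$. For integers $m\ge 0$ and $0\le l\le m+1$ and a matrix $\mu$ on $\mathcal H$, define $$H^m_l(\mu)=\sum_{\substack{i_0,\dots,i_m\in\{0,1\}\\ i_0+\dots+i_m=l}} P_+^{i_0}\mu P_+^{i_1}\mu\cdots\mu P_+^{i_m},$$ with $P_+^0=I$ the identity and $P_+^1=P_+$. The times $t^n_k$ are independent real variables (with only finitely many nonzero in the sum). The polynomials $p^n_{j,k}$ (whose existence, with real coefficients depending on $b,d_1,\dots,d_M$, is part of the setup) are those for which the equations read $\frac{\partial}{\partial t^n_k}\alpha_j=i\,p^n_{j,k}(|\alpha_1|^2,\dots,|\alpha_M|^2)\alpha_j$. *)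

theory Defs
  imports "HOL-Analysis.Analysis" "Jordan_Normal_Form.Matrix"
begin

text \<open>H = H_+ (+) H_-, with H_+ = C^N spanned by the indices
  0..N-1 and H_- = C^M spanned by the indices N..N+M-1.  The M-tuple alpha_1..alpha_M
  is represented by alpha 0 .. alpha (M-1).\<close>

definition Pplus :: "nat \<Rightarrow> nat \<Rightarrow> complex mat" where
  "Pplus N M = mat (N+M) (N+M) (\<lambda>(r,c). if r = c \<and> r < N then 1 else 0)"

text \<open>Product  P^{i_0} mu P^{i_1} mu ... mu P^{i_m}, the list being [i_0,...,i_m]
  (True means exponent 1, i.e. the factor P_+; False means the identity).\<close>
fun hprod :: "nat \<Rightarrow> complex mat \<Rightarrow> complex mat \<Rightarrow> bool list \<Rightarrow> complex mat" where
  "hprod d P mu [] = 1\<^sub>m d"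
| "hprod d P mu [i] = (if i then P else 1\<^sub>m d)"
| "hprod d P mu (i # j # is) = (if i then P else 1\<^sub>m d) * mu * hprod d P mu (j # is)"

definition Hml :: "nat \<Rightarrow> nat \<Rightarrow> nat \<Rightarrow> nat \<Rightarrow> complex mat \<Rightarrow> complex mat" where
  "Hml N M m l mu = mat (N+M) (N+M) (\<lambda>(r,c).
     \<Sum>is\<in>{is. length is = m + 1 \<and> length (filter id is) = l}.
        hprod (N+M) (Pplus N M) mu is $$ (r,c))"

text \<open>The block X_{--} = P_- X P_- as an M x M matrix on H_-.\<close>
definition minus_block :: "nat \<Rightarrow> nat \<Rightarrow> complex mat \<Rightarrow> complex mat" where
  "minus_block N M X = mat M M (\<lambda>(a,c). X $$ (N + a, N + c))"

definition umat :: "nat \<Rightarrow> nat \<Rightarrow> (nat \<Rightarrow> complex) \<Rightarrow> complex mat" where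
  "umat N M \<alpha> = mat M N (\<lambda>(a,c). if c = 0 then \<alpha> a else 0)"

definition mumat :: "nat \<Rightarrow> nat \<Rightarrow> real \<Rightarrow> (nat \<Rightarrow> complex) \<Rightarrow> complex mat \<Rightarrow> complex mat" where
  "mumat N M b d u = (let
      Bm = mat N N (\<lambda>(r,c). if r = 0 \<and> c = 0 then complex_of_real b else 0);
      Dm = mat M M (\<lambda>(r,c). if r = c then d r else 0);
      ustar = mat N M (\<lambda>(r,c). cnj (u $$ (c,r)));
      BU = Bm * ustar;
      UB = u * Bm
    in mat (N+M) (N+M) (\<lambda>(r,c).
        if r < N \<and> c < N then 0
        else if r < N then - (BU $$ (r, c - N))
        else if c < N then UB $$ (r - N, c)
        else Dm $$ (r - N, c - N)))"

definition rhs :: "nat \<Rightarrow> nat \<Rightarrow> real \<Rightarrow> (nat \<Rightarrow> complex) \<Rightarrow> nat \<Rightarrow> nat \<Rightarrow> complex mat \<Rightarrow> complex mat" where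
  "rhs N M b d n k u =
     (\<i> ^ (n+1)) \<cdot>\<^sub>m (minus_block N M (mumat N M b d u * Hml N M (n - 1) (k - 1) (mumat N M b d u)) * u)"

definition valid_idx :: "nat \<times> nat \<Rightarrow> bool" where
  "valid_idx nk = (1 \<le> fst nk \<and> 1 \<le> snd nk \<and> 2 * snd nk \<le> fst nk + 2)"

definition adm_time :: "(nat \<times> nat \<Rightarrow> real) \<Rightarrow> bool" where
  "adm_time t = (finite {x. t x \<noteq> 0} \<and> (\<forall>x. \<not> valid_idx x \<longrightarrow> t x = 0))"

definition real_mpoly :: "nat \<Rightarrow> ((nat \<Rightarrow> real) \<Rightarrow> real) \<Rightarrow> bool" where
  "real_mpoly M f = (\<exists>E c. finite E \<and> (\<forall>e\<in>E. \<forall>l\<ge>M. e l = 0) \<and>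
      (\<forall>x. f x = (\<Sum>e\<in>E. c e * (\<Prod>l<M. x l ^ e l))))"

end

theory Submission
  imports Defs
begin

text \<open>The right-hand side of the (n,k) equation multiplies each alpha_j by
  i p^n_{j,k}(|alpha_1|^2, ..., |alpha_M|^2). Along the proposed solution the moduli |alpha_j|
  never change, so these multipliers are constants, and the exponential of a phase that is
  linear in the times has exactly these multipliers as its partial derivatives.\<close>

lemma umat_index:
  assumes "a < M" and "c < N"
  shows "umat N M \<beta> $$ (a, c) = (if c = 0 then \<beta> a else 0)"
  using assms unfolding umat_def by simp

lemma sum_support_fun_upd:
  fixes f t :: "'a \<Rightarrow> 'b::comm_ring"
  assumes "finite {x. t x \<noteq> 0}" and "P y"
  shows "(\<Sum>x | P x \<and> (t(y := s)) x \<noteq> 0. f x * (t(y := s)) x)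
       = f y * s + (\<Sum>x | P x \<and> t x \<noteq> 0 \<and> x \<noteq> y. f x * t x)"
proof -
  let ?A = "{x. P x \<and> t x \<noteq> 0 \<and> x \<noteq> y}"
  have finite_A: "finite ?A"
    using assms(1) by (rule rev_finite_subset) auto
  have "(\<Sum>x | P x \<and> (t(y := s)) x \<noteq> 0. f x * (t(y := s)) x)
      = (\<Sum>x\<in>insert y ?A. f x * (t(y := s)) x)"
    by (rule sum.mono_neutral_left) (use finite_A assms(2) in auto)
  also have "\<dots> = f y * s + (\<Sum>x\<in>?A. f x * (t(y := s)) x)"
    using finite_A by (subst sum.insert) auto
  also have "(\<Sum>x\<in>?A. f x * (t(y := s)) x) = (\<Sum>x\<in>?A. f x * t x)"
    by (rule sum.cong) auto
  finally show ?thesis .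
qed

lemma has_vector_derivative_exp_linear_phase:
  fixes z :: complex and f t :: "'a \<Rightarrow> real"
  assumes "finite {x. t x \<noteq> 0}" and "P y"
  shows "((\<lambda>s. z * exp (\<i> * of_real (\<Sum>x | P x \<and> (t(y := s)) x \<noteq> 0. f x * (t(y := s)) x)))
           has_vector_derivative
           \<i> * of_real (f y) * (z * exp (\<i> * of_real (\<Sum>x | P x \<and> t x \<noteq> 0. f x * t x))))
         (at (t y))"
proof -
  define C where "C = (\<Sum>x | P x \<and> t x \<noteq> 0 \<and> x \<noteq> y. f x * t x)"
  have phase: "(\<Sum>x | P x \<and> (t(y := s)) x \<noteq> 0. f x * (t(y := s)) x) = f y * s + C" for s
    unfolding C_def using assms by (rule sum_support_fun_upd)
  have phase_at_t: "(\<Sum>x | P x \<and> t x \<noteq> 0. f x * t x) = f y * t y + C"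
    using phase[of "t y"] by simp
  have "((\<lambda>w. z * exp (\<i> * (of_real (f y) * w + of_real C))) has_field_derivative
          z * exp (\<i> * (of_real (f y) * of_real (t y) + of_real C)) * (\<i> * of_real (f y)))
        (at (of_real (t y)))"
    by (auto intro!: derivative_eq_intros)
  from has_vector_derivative_real_field[OF this]
  show ?thesis
    unfolding phase phase_at_t by (simp add: mult_ac)
qed

theorem theorem4p2:
  fixes N M :: nat and b :: real and d :: "nat \<Rightarrow> complex"
    and p :: "nat \<Rightarrow> nat \<Rightarrow> nat \<Rightarrow> (nat \<Rightarrow> real) \<Rightarrow> real"
    and \<alpha>0 :: "nat \<Rightarrow> complex"
  assumes "N \<ge> 1" and "M \<ge> 1" and "b > 0"
    and "\<forall>j<M. Re (d j) = 0"
    and p_poly: "\<forall>n k j. valid_idx (n,k) \<and> j < M \<longrightarrow> real_mpoly M (p n j k)"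
    and p_rhs: "\<forall>n k \<alpha>. valid_idx (n,k) \<and> (\<Sum>j<M. (cmod (\<alpha> j))\<^sup>2) = 1 \<longrightarrow>
        (\<forall>a<M. \<forall>c<N. rhs N M b d n k (umat N M \<alpha>) $$ (a,c) =
           (if c = 0 then \<i> * complex_of_real (p n a k (\<lambda>l. (cmod (\<alpha> l))\<^sup>2)) * \<alpha> a else 0))"
    and "(\<Sum>j<M. (cmod (\<alpha>0 j))\<^sup>2) = 1"
  defines "\<alpha> \<equiv> (\<lambda>(t :: nat \<times> nat \<Rightarrow> real) (j :: nat).
      \<alpha>0 j * exp (\<i> * complex_of_real
        (\<Sum>x\<in>{x. valid_idx x \<and> t x \<noteq> 0}.
            p (fst x) j (snd x) (\<lambda>l. (cmod (\<alpha>0 l))\<^sup>2) * t x)))"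
  shows "(\<forall>j<M. \<alpha> (\<lambda>_. 0) j = \<alpha>0 j) \<and>
    (\<forall>t. adm_time t \<longrightarrow> (\<forall>n k. valid_idx (n,k) \<longrightarrow>
       (\<forall>a<M. \<forall>c<N.
          ((\<lambda>s. umat N M (\<alpha> (t((n,k) := s))) $$ (a,c)) has_vector_derivative
             (rhs N M b d n k (umat N M (\<alpha> t)) $$ (a,c))) (at (t (n,k))))))"
proof -
  have cmod_\<alpha>: "cmod (\<alpha> t j) = cmod (\<alpha>0 j)" for t j
    unfolding \<alpha>_def by (simp add: norm_mult)
  have "((\<lambda>s. umat N M (\<alpha> (t((n,k) := s))) $$ (a,c)) has_vector_derivative
          rhs N M b d n k (umat N M (\<alpha> t)) $$ (a,c)) (at (t (n,k)))"
    if "adm_time t" "valid_idx (n,k)" "a < M" "c < N" for t n k a c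
  proof -
    have "(\<Sum>j<M. (cmod (\<alpha> t j))\<^sup>2) = 1"
      using assms(7) by (simp add: cmod_\<alpha>)
    with p_rhs that have rhs_eq: "rhs N M b d n k (umat N M (\<alpha> t)) $$ (a,c) =
        (if c = 0 then \<i> * of_real (p n a k (\<lambda>l. (cmod (\<alpha>0 l))\<^sup>2)) * \<alpha> t a else 0)"
      by (simp add: cmod_\<alpha>)
    have "finite {x. t x \<noteq> 0}"
      using \<open>adm_time t\<close> by (simp add: adm_time_def)
    from has_vector_derivative_exp_linear_phase[where P = valid_idx and y = "(n,k)",
        OF this \<open>valid_idx (n,k)\<close>,
        of "\<alpha>0 a" "\<lambda>x. p (fst x) a (snd x) (\<lambda>l. (cmod (\<alpha>0 l))\<^sup>2)"]
    have "((\<lambda>s. \<alpha> (t((n,k) := s)) a) has_vector_derivative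
            \<i> * of_real (p n a k (\<lambda>l. (cmod (\<alpha>0 l))\<^sup>2)) * \<alpha> t a) (at (t (n,k)))"
      unfolding \<alpha>_def by simp
    then show ?thesis
      using that by (simp add: rhs_eq umat_index)
  qed
  then show ?thesis
    unfolding \<alpha>_def by simp
qed

end
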